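(* For every $n\geq 3$, the formula $\delta(n)$ is not a theorem of ${\bf T45m}$.
   Context: Formulas are built from a denumerable set of propositional variables $p_1,p_2,\ldots$ by the unary connectives $\neg$, $\Box$ and the binary connective $\to$; $For$ is the set of all formulas. Abbreviations: $\Diamond\alpha:=\neg\Box\neg\alpha$, $\alpha\vee\beta:=\neg\alpha\to\beta$. For formulas $\alpha_1,\ldots,\alpha_k$ ($k\ge 2$), $\bigvee\{\alpha_1,\ldots,\alpha_k\}:=((\ldots((\alpha_1\vee\alpha_2)\vee\alpha_3)\vee\ldots)\vee\alpha_k)$. For $n\geq 3$: $\alpha(n)=\bigvee\{p_j: 1\le j\le n\}$, $\beta_i(n)=\bigvee\{p_j:1\le j\le n,\ j\ne i\}$ for $1\le i\le n$, and $\delta(n)=\bigvee\{\Box\alpha(n)\to\Box\beta_i(n): 1\le i\le n\}$. ${\bf T45m}$ is the Hilbert calculus whose axioms are all instances (over $For$) of the axiom schemas of a standard Hilbert calculus for classical propositional logic in the signature $\{\neg,\to\}$, plus all instances of: (K) $\Box(\alpha\to\beta)\to(\Box\alpha\to\Box\beta)$; (K1) $\Box(\alpha\to\beta)\to(\Diamond\alpha\to\Diamond\beta)$; (K2) $\Diamond(\alpha\to\beta)\to(\Box\alpha\to\Diamond\beta)$; (M1) $\neg\Diamond\alpha\to\Box(\alpha\to\beta)$; (M2) $\Box\beta\to\Box(\alpha\to\beta)$; (M3) $\Diamond\beta\to\Diamond(\alpha\to\beta)$; (M4) $\Diamond\neg\alpha\to\Diamond(\alpha\to\beta)$; (T) $\Box\alpha\to\alpha$;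 (DN1) $\Box\alpha\to\Box\neg\neg\alpha$; (DN2) $\Box\neg\neg\alpha\to\Box\alpha$; (4) $\Box\alpha\to\Box\Box\alpha$; (5) $\Diamond\Box\alpha\to\Box\alpha$; modus ponens is the only rule. *)

theory Defs
  imports Main
begin

datatype form = Var nat | Neg form | Box form | Imp form form

definition Dia :: "form \<Rightarrow> form" where "Dia a = Neg (Box (Neg a))"
definition Disj :: "form \<Rightarrow> form \<Rightarrow> form" where "Disj a b = Imp (Neg a) b"

fun BigDisj :: "form list \<Rightarrow> form" where
  "BigDisj [] = Var 0"
| "BigDisj (x # xs) = foldl Disj x xs"

text \<open>Propositional variable p_j is Var j (j >= 1).\<close>
definition alpha :: "nat \<Rightarrow> form" where
  "alpha n = BigDisj (map Var [1..<n+1])"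
definition beta :: "nat \<Rightarrow> nat \<Rightarrow> form" where
  "beta n i = BigDisj (map Var (filter (\<lambda>j. j \<noteq> i) [1..<n+1]))"
definition delta :: "nat \<Rightarrow> form" where
  "delta n = BigDisj (map (\<lambda>i. Imp (Box (alpha n)) (Box (beta n i))) [1..<n+1])"

text \<open>The Hilbert calculus T45m; classical part: Lukasiewicz's axioms for {neg, imp}.\<close>
inductive T45m :: "form \<Rightarrow> bool" where
  A1: "T45m (Imp a (Imp b a))"
| A2: "T45m (Imp (Imp a (Imp b c)) (Imp (Imp a b) (Imp a c)))"
| A3: "T45m (Imp (Imp (Neg a) (Neg b)) (Imp b a))"
| K:  "T45m (Imp (Box (Imp a b)) (Imp (Box a) (Box b)))"
| K1: "T45m (Imp (Box (Imp a b)) (Imp (Dia a) (Dia b)))"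
| K2: "T45m (Imp (Dia (Imp a b)) (Imp (Box a) (Dia b)))"
| M1: "T45m (Imp (Neg (Dia a)) (Box (Imp a b)))"
| M2: "T45m (Imp (Box b) (Box (Imp a b)))"
| M3: "T45m (Imp (Dia b) (Dia (Imp a b)))"
| M4: "T45m (Imp (Dia (Neg a)) (Dia (Imp a b)))"
| T:  "T45m (Imp (Box a) a)"
| DN1: "T45m (Imp (Box a) (Box (Neg (Neg a))))"
| DN2: "T45m (Imp (Box (Neg (Neg a))) (Box a))"
| Ax4: "T45m (Imp (Box a) (Box (Box a)))"
| Ax5: "T45m (Imp (Dia (Box a)) (Box a))"
| MP: "T45m (Imp a b) \<Longrightarrow> T45m a \<Longrightarrow> T45m b"

end

theory Submission
  imports Defs
begin

(* T45m is sound for Kripke models whose accessibility relation is universal.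
   Take the worlds 1, ..., n and let p_j hold exactly at world j.  Every world
   satisfies some p_j, so Box alpha(n) holds; world i satisfies no p_j with j ~= i,
   so every Box beta_i(n) fails.  Hence each disjunct of delta(n) is false. *)

fun sat :: "'w set \<Rightarrow> ('w \<Rightarrow> nat \<Rightarrow> bool) \<Rightarrow> 'w \<Rightarrow> form \<Rightarrow> bool" where
  "sat W V w (Var j) = V w j"
| "sat W V w (Neg a) = (\<not> sat W V w a)"
| "sat W V w (Box a) = (\<forall>v\<in>W. sat W V v a)"
| "sat W V w (Imp a b) = (sat W V w a \<longrightarrow> sat W V w b)"

lemma T45m_sound:
  assumes "T45m \<phi>" and "w \<in> W"
  shows "sat W V w \<phi>"
  using assms by (induction arbitrary: w rule: T45m.induct) (auto simp: Dia_def)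

lemma sat_foldl_Disj:
  "sat W V w (foldl Disj \<phi> \<psi>s) \<longleftrightarrow> sat W V w \<phi> \<or> (\<exists>\<psi>\<in>set \<psi>s. sat W V w \<psi>)"
  by (induction \<psi>s arbitrary: \<phi>) (auto simp: Disj_def)

lemma sat_BigDisj:
  assumes "\<phi>s \<noteq> []"
  shows "sat W V w (BigDisj \<phi>s) \<longleftrightarrow> (\<exists>\<phi>\<in>set \<phi>s. sat W V w \<phi>)"
  using assms by (cases \<phi>s) (auto simp: sat_foldl_Disj)

text \<open>The empty disjunction is \<open>Var 0\<close>, which is false at every world \<open>w \<noteq> 0\<close>.\<close>

lemma sat_BigDisj_Var:
  assumes "w \<noteq> 0"
  shows "sat W (\<lambda>w j. j = w) w (BigDisj (map Var js)) \<longleftrightarrow> w \<in> set js"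
  using assms by (cases js) (auto simp: sat_foldl_Disj)

lemma delta_refuted:
  assumes "n \<ge> 1"
  shows "\<not> sat {1..n} (\<lambda>w j. j = w) 1 (delta n)"
proof
  let ?sat = "sat {1..n} (\<lambda>w j. j = w)"
  assume "?sat 1 (delta n)"
  moreover have "[1..<n+1] \<noteq> []"
    using assms by simp
  ultimately obtain i where i: "i \<in> {1..n}" and "?sat 1 (Imp (Box (alpha n)) (Box (beta n i)))"
    unfolding delta_def
    by (subst (asm) sat_BigDisj) (auto simp del: sat.simps(4) upt_Suc simp: less_Suc_eq_le)
  moreover have "?sat 1 (Box (alpha n))"
    unfolding alpha_def by (auto simp del: upt_Suc simp add: sat_BigDisj_Var)
  moreover have "\<not> ?sat i (beta n i)"
    using i unfolding beta_def by (simp del: upt_Suc add: sat_BigDisj_Var)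
  ultimately show False
    using i by auto
qed

theorem mainTheorem14:
  fixes n :: nat
  assumes "n \<ge> 3"
  shows "\<not> T45m (delta n)"
proof
  assume "T45m (delta n)"
  then have "sat {1..n} (\<lambda>w j. j = w) 1 (delta n)"
    by (rule T45m_sound) (use assms in auto)
  with assms delta_refuted show False
    by simp
qed

end
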